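(* Let $\mathbf b=b_0b_1b_2\cdots\in\{1,-1\}^{\mathbb N}$. For each $t\ge 0$ there is a nonnegative integer $\ell_t$ such that $D_{k,b_k}(\ell_t,\ell_t+2^{t+2}-1)=0$ for all $k\ge t$.
   Context: For $b\in\{-1,1\}$, $k\ge0$ and integers $\ell\le n$, $D_{k,b}(\ell,n)$ denotes the number of integers $i$ with $\ell<i\le n$ and $i\equiv(2+b)\cdot 2^k \pmod{2^{k+2}}$. *)

theory Defs
  imports Main
begin

definition D :: "nat \<Rightarrow> int \<Rightarrow> int \<Rightarrow> int \<Rightarrow> nat" where
  "D k b l n = card {i::int. l < i \<and> i \<le> n \<and> i mod 2 ^ (k + 2) = ((2 + b) * 2 ^ k) mod 2 ^ (k + 2)}"

end

theory Submission
  imports Defs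
begin

text \<open>Every counted \<open>i\<close> is a multiple of \<open>2^k\<close> with \<open>k \<ge> t\<close>, so after scaling by \<open>2^t\<close> it suffices
  to find three consecutive integers \<open>u\<close>, none of the form \<open>2^d (2 + a d + 4q)\<close> where
  \<open>a d = b (t + d)\<close>. Writing \<open>u = 2^e r\<close> with \<open>r\<close> odd, \<open>u\<close> has this form exactly when
  \<open>r \<equiv> 2 + a e \<equiv> -a e (mod 4)\<close>, so it suffices that \<open>r \<equiv> a e (mod 4)\<close>. The three integers
  \<open>m, m + a 0, m + 2 a 0\<close> satisfy this for \<open>m = 8 (4 + a 3)\<close> if \<open>a 0 = a 1\<close> and for
  \<open>m = 4 (4 + a 2)\<close> otherwise.\<close>

lemma D_scaled_window_eq_0:
  fixes L c :: int
  assumes "t \<le> k"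
    and unmarked: "\<And>u q. L < u \<Longrightarrow> u < L + n \<Longrightarrow> u \<noteq> 2 ^ (k - t) * (2 + c + 4 * q)"
  shows "D k c (2 ^ t * L) (2 ^ t * (L + n) - 1) = 0"
proof -
  have empty: "{i. 2 ^ t * L < i \<and> i \<le> 2 ^ t * (L + n) - 1 \<and>
                   i mod 2 ^ (k + 2) = ((2 + c) * 2 ^ k) mod 2 ^ (k + 2)} = {}"
  proof (rule equals0I)
    fix i
    assume "i \<in> {i. 2 ^ t * L < i \<and> i \<le> 2 ^ t * (L + n) - 1 \<and>
                   i mod 2 ^ (k + 2) = ((2 + c) * 2 ^ k) mod 2 ^ (k + 2)}"
    then have lower: "2 ^ t * L < i" and upper: "i < 2 ^ t * (L + n)"
      and "i mod 2 ^ (k + 2) = ((2 + c) * 2 ^ k) mod 2 ^ (k + 2)"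
      by auto
    then have "(2::int) ^ (k + 2) dvd i - (2 + c) * 2 ^ k"
      by (simp only: mod_eq_dvd_iff)
    then obtain q where "i - (2 + c) * 2 ^ k = 2 ^ (k + 2) * q"
      by blast
    moreover have "(2::int) ^ k = 2 ^ t * 2 ^ (k - t)"
      using \<open>t \<le> k\<close> by (simp flip: power_add)
    ultimately have i: "i = 2 ^ t * (2 ^ (k - t) * (2 + c + 4 * q))"
      by (simp add: algebra_simps)
    show False
      using unmarked[of "2 ^ (k - t) * (2 + c + 4 * q)" q] lower upper
      unfolding i by (simp add: mult_less_cancel_left)
  qed
  show ?thesis
    unfolding D_def by (subst empty) simp
qed

lemma power2_mult_odd_eq_imp_le:
  fixes r s :: int
  assumes "odd r" "e \<le> d" "2 ^ e * r = 2 ^ d * s"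
  shows "d = e \<and> r = s"
proof -
  have "2 ^ e * r = 2 ^ e * (2 ^ (d - e) * s)"
    using assms(2,3) by (simp add: mult.assoc flip: power_add)
  then have r: "r = 2 ^ (d - e) * s"
    by simp
  with \<open>odd r\<close> have "d - e = 0"
    by (cases "d - e") simp_all
  with assms(2) r show ?thesis
    by simp
qed

lemma power2_mult_odd_eq:
  fixes r s :: int
  assumes "odd r" "odd s" "2 ^ e * r = 2 ^ d * s"
  shows "e = d \<and> r = s"
proof (cases "e \<le> d")
  case True
  then show ?thesis
    using power2_mult_odd_eq_imp_le[OF \<open>odd r\<close> True assms(3)] by simp
next
  case False
  then show ?thesis
    using power2_mult_odd_eq_imp_le[OF \<open>odd s\<close> _ assms(3)[symmetric]] by simp
qed

definition odd_part_cong :: "(nat \<Rightarrow> int) \<Rightarrow> int \<Rightarrow> bool" where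
  "odd_part_cong a u \<longleftrightarrow> (\<exists>e r. odd r \<and> r mod 4 = a e mod 4 \<and> u = 2 ^ e * r)"

lemma odd_part_congI:
  "u = 2 ^ e * r \<Longrightarrow> odd r \<Longrightarrow> r mod 4 = a e mod 4 \<Longrightarrow> odd_part_cong a u"
  unfolding odd_part_cong_def by blast

lemma odd_part_cong_not_marked:
  fixes a :: "nat \<Rightarrow> int"
  assumes "\<And>d. odd (a d)" "odd_part_cong a u"
  shows "u \<noteq> 2 ^ d * (2 + a d + 4 * q)"
proof
  obtain e r where "odd r" "r mod 4 = a e mod 4" "u = 2 ^ e * r"
    using assms(2) unfolding odd_part_cong_def by blast
  moreover assume "u = 2 ^ d * (2 + a d + 4 * q)"
  moreover have "odd (2 + a d + 4 * q)"
    using assms(1) by simp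
  ultimately have "r mod 4 = a e mod 4" "r = 2 + a e + 4 * q"
    using power2_mult_odd_eq by metis+
  then show False
    by presburger
qed

lemma odd_part_cong_three_consecutive:
  fixes a :: "nat \<Rightarrow> int"
  assumes sign: "\<And>d. a d \<in> {-1, 1}"
    and m: "m = (if a 1 = a 0 then 8 * (4 + a 3) else 4 * (4 + a 2))"
    and u: "u \<in> {m, m + a 0, m + 2 * a 0}"
  shows "odd_part_cong a u"
proof -
  have a0: "a 0 = -1 \<or> a 0 = 1" and a1: "a 1 = -1 \<or> a 1 = 1"
    and a2: "a 2 = -1 \<or> a 2 = 1" and a3: "a 3 = -1 \<or> a 3 = 1"
    using sign by auto
  from u consider "u = m" | "u = m + a 0" | "u = m + 2 * a 0"
    by blast
  note window = this
  show ?thesis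
  proof (cases "a 1 = a 0")
    case True
    with m have m: "m = 8 * (4 + a 3)"
      by simp
    from window show ?thesis
    proof cases
      case 1
      then show ?thesis
        using a3 by (intro odd_part_congI[of u 3 "4 + a 3"]) (auto simp: m)
    next
      case 2
      then show ?thesis
        using a0 a3 by (intro odd_part_congI[of u 0 u]) (auto simp: m)
    next
      case 3
      then show ?thesis
        using a0 a3 True by (intro odd_part_congI[of u 1 "16 + 4 * a 3 + a 0"]) (auto simp: m)
    qed
  next
    case False
    with m a0 a1 have m: "m = 4 * (4 + a 2)" and "a 1 = - a 0"
      by auto
    from window show ?thesis
    proof cases
      case 1
      then show ?thesis
        using a2 by (intro odd_part_congI[of u 2 "4 + a 2"]) (auto simp: m)
    next
      case 2
      then show ?thesis
        using a0 a2 by (intro odd_part_congI[of u 0 u]) (auto simp: m)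
    next
      case 3
      then show ?thesis
        using a0 a2 \<open>a 1 = - a 0\<close>
        by (intro odd_part_congI[of u 1 "8 + 2 * a 2 + a 0"]) (auto simp: m)
    qed
  qed
qed

lemma unmarked_window_exists:
  fixes a :: "nat \<Rightarrow> int"
  assumes sign: "\<And>d. a d \<in> {-1, 1}"
  shows "\<exists>L \<ge> 0. \<forall>u d q. L < u \<longrightarrow> u < L + 4 \<longrightarrow> u \<noteq> 2 ^ d * (2 + a d + 4 * q)"
proof -
  define m where "m = (if a 1 = a 0 then 8 * (4 + a 3) else 4 * (4 + a 2))"
  have odd_a: "odd (a d)" for d
    using sign[of d] by auto
  have a0: "a 0 = -1 \<or> a 0 = 1"
    using sign[of 0] by auto
  have "m \<ge> 12"
    using sign[of 2] sign[of 3] unfolding m_def by auto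
  have "u \<noteq> 2 ^ d * (2 + a d + 4 * q)" if "m + a 0 - 2 < u" "u < m + a 0 + 2" for u d q
  proof -
    have "u \<in> {m, m + a 0, m + 2 * a 0}"
      using that a0 by auto
    then have "odd_part_cong a u"
      by (rule odd_part_cong_three_consecutive[OF sign m_def])
    then show ?thesis
      by (rule odd_part_cong_not_marked[OF odd_a])
  qed
  moreover have "m + a 0 - 2 \<ge> 0"
    using a0 \<open>m \<ge> 12\<close> by auto
  ultimately show ?thesis
    by (intro exI[of _ "m + a 0 - 2"]) auto
qed

theorem lemma5p1:
  fixes b :: "nat \<Rightarrow> int"
  assumes "\<forall>k. b k \<in> {-1, 1}"
  shows "\<forall>t::nat. \<exists>l::int. l \<ge> 0 \<and>
           (\<forall>k\<ge>t. D k (b k) l (l + 2 ^ (t + 2) - 1) = 0)"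
proof
  fix t :: nat
  obtain L :: int where "L \<ge> 0"
    and unmarked: "\<forall>u d q. L < u \<longrightarrow> u < L + 4 \<longrightarrow> u \<noteq> 2 ^ d * (2 + b (t + d) + 4 * q)"
    using unmarked_window_exists[of "\<lambda>d. b (t + d)"] assms by blast
  have "D k (b k) (2 ^ t * L) (2 ^ t * L + 2 ^ (t + 2) - 1) = 0" if "t \<le> k" for k
  proof -
    have "D k (b k) (2 ^ t * L) (2 ^ t * (L + 4) - 1) = 0"
    proof (rule D_scaled_window_eq_0[OF that])
      fix u q
      assume "L < u" "u < L + 4"
      then show "u \<noteq> 2 ^ (k - t) * (2 + b k + 4 * q)"
        using unmarked[rule_format, of u "k - t" q] that by simp
    qed
    then show ?thesis
      by (simp add: power_add algebra_simps)
  qed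
  with \<open>L \<ge> 0\<close> show "\<exists>l::int. l \<ge> 0 \<and> (\<forall>k\<ge>t. D k (b k) l (l + 2 ^ (t + 2) - 1) = 0)"
    by (intro exI[of _ "2 ^ t * L"]) simp
qed

end
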